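(* Let $p(x)=\sum_{k=2}^m a_kx^k$ be a real polynomial of degree $m$ (so $p(0)=p'(0)=0$), convex on an interval $[0,A]$, and suppose $p(A)>1$. Then $p(x)=1$ has a unique solution $\mu$ in $[0,A]$, and $$\mu\approx\left[\sum_{k=2}^m|a_k|^{1/k}\right]^{-1},$$ where the implied constants depend only on $m$.
   Context: $X\approx Y$ means $cY\le X\le c^{-1}Y$ for some $c>0$ depending only on $m$ (not on $A$ or the coefficients). *)

theory Defs
  imports "HOL-Analysis.Analysis"
begin

end

theory Submission
  imports Defs
begin

(* Convexity together with p(0) = 0 gives p(t x) \<le> t p(x) for t \<in> [0,1], and p'(0) = 0 then
   forces p \<ge> 0 on [0,A]; so p crosses the level 1 exactly once, at \<mu> say.
   Put b_k = |a_k|^(1/k) \<mu>.  From 1 = p(\<mu>) \<le> \<Sum> b_k^k one gets \<Sum> b_k \<ge> 1.  Conversely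
   q(t) = p(t \<mu>) satisfies 0 \<le> q \<le> 1 on [0,1]; on polynomials of degree \<le> m the coefficients
   are bounded by a constant K_m times the sup norm on [0,1] (induction on the degree, using that
   the forward difference lowers the degree), so b_k^k = |a_k \<mu>^k| \<le> K_m and
   \<Sum> b_k \<le> (m - 1) max 1 K_m. *)

lemma convex_on_scale_le:
  assumes "convex_on {0..A} f" "f 0 = 0" "x \<in> {0..A}" "0 \<le> t" "t \<le> 1"
  shows "f (t * x) \<le> t * f x"
  using convex_onD[OF assms(1), of t 0 x] assms by simp

lemma convex_on_nonneg_of_deriv_zero:
  fixes f :: "real \<Rightarrow> real"
  assumes cvx: "convex_on {0..A} f" and f0: "f 0 = 0" and f'0: "(f has_real_derivative 0) (at 0)"
    and x: "x \<in> {0..A}"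
  shows "0 \<le> f x"
proof (cases "x = 0")
  case True
  then show ?thesis using f0 by simp
next
  case False
  with x have x_pos: "x > 0" by simp
  have "((\<lambda>s. f s / s) \<longlongrightarrow> 0) (at_right 0)"
    using f'0 f0 by (simp add: DERIV_def filterlim_at_split)
  moreover have "eventually (\<lambda>s. f s / s \<le> f x / x) (at_right 0)"
    using eventually_at_right_real[OF x_pos]
  proof (rule eventually_mono)
    fix s assume s: "s \<in> {0<..<x}"
    have "f ((s / x) * x) \<le> (s / x) * f x"
      using convex_on_scale_le[OF cvx f0 x, of "s / x"] s x_pos by simp
    then show "f s / s \<le> f x / x"
      using s x_pos by (simp add: field_simps)
  qed
  ultimately have "0 \<le> f x / x"
    by (rule tendsto_upperbound) simp
  then show ?thesis using x_pos by (simp add: zero_le_divide_iff)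
qed

lemma convex_on_ex1_level:
  fixes f :: "real \<Rightarrow> real"
  assumes cvx: "convex_on {0..A} f" and f0: "f 0 = 0" and cont: "continuous_on {0..A} f"
    and A: "0 \<le> A" and v: "0 < v" "v \<le> f A"
  shows "\<exists>!x. x \<in> {0..A} \<and> f x = v"
proof -
  have less_imp_ne: "f x \<noteq> v" if "x \<in> {0..A}" "y \<in> {0..A}" "x < y" "f y = v" for x y
  proof
    assume "f x = v"
    have "f ((x / y) * y) \<le> (x / y) * f y"
      using convex_on_scale_le[OF cvx f0, of y "x / y"] that by simp
    with \<open>f x = v\<close> that have "v * y \<le> v * x" by (simp add: field_simps)
    with that v show False by simp
  qed
  obtain x where "x \<in> {0..A}" "f x = v"
    using IVT'[of f 0 v A] f0 v cont A by auto
  then show ?thesis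
    using less_imp_ne by (metis linorder_neqE_linordered_idom)
qed

lemma power_add_minus_power_eq_sum:
  fixes t h :: "'a::comm_ring_1"
  assumes "k \<le> Suc n"
  shows "(t + h) ^ k - t ^ k
    = (\<Sum>j\<le>n. (if j < k then of_nat (k choose j) * h ^ (k - j) else 0) * t ^ j)"
proof -
  have "(t + h) ^ k = (\<Sum>j\<le>k. of_nat (k choose j) * t ^ j * h ^ (k - j))"
    by (rule binomial_ring)
  also have "\<dots> = (\<Sum>j<k. of_nat (k choose j) * h ^ (k - j) * t ^ j) + t ^ k"
    by (simp add: lessThan_Suc_atMost[symmetric] algebra_simps)
  finally have "(t + h) ^ k = \<dots>" .
  moreover have "(\<Sum>j\<le>n. (if j < k then of_nat (k choose j) * h ^ (k - j) else 0) * t ^ j)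
      = (\<Sum>j\<in>{..n} \<inter> {j. j < k}. of_nat (k choose j) * h ^ (k - j) * t ^ j)"
    by (simp add: sum.inter_restrict if_distrib[of "\<lambda>x. x * _"] cong: if_cong)
  moreover have "{..n} \<inter> {j. j < k} = {..<k}"
    using assms by auto
  ultimately show ?thesis by simp
qed

lemma polynomial_forward_difference:
  fixes c :: "nat \<Rightarrow> 'a::comm_ring_1"
  obtains e where
    "\<And>t. (\<Sum>k\<le>Suc n. c k * (t + h) ^ k) - (\<Sum>k\<le>Suc n. c k * t ^ k) = (\<Sum>j\<le>n. e j * t ^ j)"
    "e n = of_nat (Suc n) * h * c (Suc n)"
proof
  define e where "e j = (\<Sum>k\<le>Suc n. c k * (if j < k then of_nat (k choose j) * h ^ (k - j) else 0))" for j
  fix t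
  have "(\<Sum>k\<le>Suc n. c k * (t + h) ^ k) - (\<Sum>k\<le>Suc n. c k * t ^ k)
        = (\<Sum>k\<le>Suc n. c k * ((t + h) ^ k - t ^ k))"
    by (simp add: sum_subtractf algebra_simps)
  also have "\<dots> = (\<Sum>k\<le>Suc n. \<Sum>j\<le>n. c k * (if j < k then of_nat (k choose j) * h ^ (k - j) else 0) * t ^ j)"
    by (rule sum.cong[OF refl]) (simp add: power_add_minus_power_eq_sum sum_distrib_left mult.assoc)
  also have "\<dots> = (\<Sum>j\<le>n. e j * t ^ j)"
    unfolding e_def sum_distrib_right by (rule sum.swap)
  finally show "(\<Sum>k\<le>Suc n. c k * (t + h) ^ k) - (\<Sum>k\<le>Suc n. c k * t ^ k) = (\<Sum>j\<le>n. e j * t ^ j)" .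
  show "e n = of_nat (Suc n) * h * c (Suc n)"
    by (simp add: e_def)
qed

lemma polynomial_top_coeff_bound:
  fixes c :: "nat \<Rightarrow> real"
  assumes h: "h > 0"
    and lower_degree: "\<And>e M. \<forall>t\<in>{0..h}. \<bar>\<Sum>j\<le>n. e j * t ^ j\<bar> \<le> M \<Longrightarrow> \<bar>e n\<bar> \<le> K * M"
    and bd: "\<forall>t\<in>{0..2 * h}. \<bar>\<Sum>k\<le>Suc n. c k * t ^ k\<bar> \<le> M"
  shows "\<bar>c (Suc n)\<bar> \<le> 2 * K / h * M"
proof -
  obtain e where diff:
    "\<And>t. (\<Sum>k\<le>Suc n. c k * (t + h) ^ k) - (\<Sum>k\<le>Suc n. c k * t ^ k) = (\<Sum>j\<le>n. e j * t ^ j)"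
    and e_n: "e n = of_nat (Suc n) * h * c (Suc n)"
    using polynomial_forward_difference[where c = c and h = h and n = n] by blast
  have "\<bar>\<Sum>j\<le>n. e j * t ^ j\<bar> \<le> 2 * M" if "t \<in> {0..h}" for t
  proof -
    have "\<bar>\<Sum>k\<le>Suc n. c k * (t + h) ^ k\<bar> \<le> M" "\<bar>\<Sum>k\<le>Suc n. c k * t ^ k\<bar> \<le> M"
      using bd that h by auto
    then show ?thesis unfolding diff[symmetric] by linarith
  qed
  then have "\<bar>e n\<bar> \<le> K * (2 * M)"
    using lower_degree by blast
  moreover have "h * \<bar>c (Suc n)\<bar> \<le> \<bar>e n\<bar>"
    using h by (simp add: e_n abs_mult mult_right_mono)
  ultimately show ?thesis
    using h by (simp add: field_simps)
qed

lemma polynomial_coeffs_bounded_by_sup: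
  fixes b :: real
  assumes "b > 0"
  shows "\<exists>K\<ge>0. \<forall>c M. (\<forall>t\<in>{0..b}. \<bar>\<Sum>k\<le>n. c k * t ^ k\<bar> \<le> M) \<longrightarrow> (\<forall>k\<le>n. \<bar>c k\<bar> \<le> K * M)"
  using assms
proof (induction n arbitrary: b)
  case 0
  then show ?case
    by (intro exI[of _ 1]) (auto dest: bspec[of _ _ 0])
next
  case (Suc n)
  obtain K1 where K1_nonneg: "K1 \<ge> 0"
    and K1: "\<And>e M. \<forall>t\<in>{0..b / 2}. \<bar>\<Sum>j\<le>n. e j * t ^ j\<bar> \<le> M \<Longrightarrow> \<bar>e n\<bar> \<le> K1 * M"
    using Suc.IH[of "b / 2"] Suc.prems by fastforce
  obtain K2 where K2:
    "\<And>c M. \<forall>t\<in>{0..b}. \<bar>\<Sum>k\<le>n. c k * t ^ k\<bar> \<le> M \<Longrightarrow> \<forall>k\<le>n. \<bar>c k\<bar> \<le> K2 * M"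
    using Suc.IH[OF Suc.prems] by blast
  define B where "B = 2 * K1 / (b / 2)"
  define K where "K = max B (K2 * (1 + B * b ^ Suc n))"
  have "\<forall>k\<le>Suc n. \<bar>c k\<bar> \<le> K * M"
    if bd: "\<forall>t\<in>{0..b}. \<bar>\<Sum>k\<le>Suc n. c k * t ^ k\<bar> \<le> M" for c M
  proof -
    have M: "M \<ge> 0" using bd Suc.prems by (auto dest: bspec[of _ _ 0])
    have top: "\<bar>c (Suc n)\<bar> \<le> B * M"
      unfolding B_def
      by (rule polynomial_top_coeff_bound[OF _ K1]) (use bd Suc.prems in auto)
    have "\<bar>\<Sum>k\<le>n. c k * t ^ k\<bar> \<le> M * (1 + B * b ^ Suc n)" if t: "t \<in> {0..b}" for t
    proof -
      have "\<bar>c (Suc n) * t ^ Suc n\<bar> \<le> (B * M) * b ^ Suc n"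
        unfolding abs_mult using t top by (intro mult_mono power_mono) (auto simp del: power_Suc)
      moreover have "\<bar>\<Sum>k\<le>Suc n. c k * t ^ k\<bar> \<le> M" using bd t by auto
      ultimately show ?thesis by (simp add: algebra_simps)
    qed
    then have "\<forall>k\<le>n. \<bar>c k\<bar> \<le> K2 * (M * (1 + B * b ^ Suc n))"
      using K2 by blast
    then have "\<forall>k\<le>n. \<bar>c k\<bar> \<le> K2 * (1 + B * b ^ Suc n) * M"
      by (simp add: ac_simps)
    moreover have "K2 * (1 + B * b ^ Suc n) * M \<le> K * M" "B * M \<le> K * M"
      using M by (simp_all add: K_def mult_right_mono)
    ultimately show ?thesis
      using top by (metis le_Suc_eq order_trans)
  qed
  moreover have "K \<ge> 0"
    using K1_nonneg Suc.prems by (simp add: K_def B_def le_max_iff_disj)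
  ultimately show ?case by blast
qed

lemma sum_ge_one_of_sum_powers_ge_one:
  fixes b :: "nat \<Rightarrow> real"
  assumes S: "finite S" "\<And>k. k \<in> S \<Longrightarrow> 0 \<le> b k \<and> 1 \<le> k" and powers: "1 \<le> (\<Sum>k\<in>S. b k ^ k)"
  shows "1 \<le> (\<Sum>k\<in>S. b k)"
proof (cases "\<exists>k\<in>S. 1 \<le> b k")
  case True
  then obtain k where "k \<in> S" "1 \<le> b k" by blast
  moreover have "b k \<le> (\<Sum>k\<in>S. b k)"
    using S \<open>k \<in> S\<close> by (intro member_le_sum) auto
  ultimately show ?thesis by linarith
next
  case False
  have "b k ^ k \<le> b k ^ 1" if "k \<in> S" for k
    using S(2)[OF that] False that by (intro power_decreasing) auto
  then have "(\<Sum>k\<in>S. b k ^ k) \<le> (\<Sum>k\<in>S. b k)"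
    by (intro sum_mono) simp
  with powers show ?thesis by linarith
qed

lemma sum_le_card_of_powers_le:
  fixes b :: "nat \<Rightarrow> real" and K :: real
  assumes "\<And>k. k \<in> S \<Longrightarrow> 0 \<le> b k \<and> 1 \<le> k \<and> b k ^ k \<le> K"
  shows "(\<Sum>k\<in>S. b k) \<le> card S * max 1 K"
proof -
  have "b k \<le> max 1 K" if "k \<in> S" for k
  proof -
    have "b k ^ k \<le> max 1 K ^ 1" using assms[OF that] by (simp add: le_max_iff_disj)
    also have "\<dots> \<le> max 1 K ^ k" using assms[OF that] by (intro power_increasing) auto
    finally show ?thesis
      using assms[OF that] by (simp add: power_mono_iff)
  qed
  then show ?thesis
    using sum_bounded_above[of S b "max 1 K"] by simp
qed

lemma abs_mult_power_eq_powr_root: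
  fixes x y :: real
  assumes "k > 0"
  shows "\<bar>x\<bar> * y ^ k = (\<bar>x\<bar> powr (1 / real k) * y) ^ k"
  using assms by (simp add: power_mult_distrib root_powr_inverse[symmetric])

lemma has_real_derivative_sum_power_from_two_at_0:
  "((\<lambda>x. \<Sum>k=2..m. a k * x ^ k) has_real_derivative 0) (at 0)"
proof -
  have "((\<lambda>x. \<Sum>k=2..m. a k * x ^ k)
      has_real_derivative (\<Sum>k=2..m. a k * (of_nat k * 0 ^ (k - 1)))) (at 0)"
    by (intro derivative_eq_intros) auto
  moreover have "(\<Sum>k=2..m. a k * (of_nat k * 0 ^ (k - 1))) = 0"
    by (intro sum.neutral) auto
  ultimately show ?thesis by simp
qed

lemma level_point_lower_bound:
  fixes a :: "nat \<Rightarrow> real"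
  assumes "0 \<le> \<mu>" "(\<Sum>k=2..m. a k * \<mu> ^ k) = 1"
  shows "1 \<le> (\<Sum>k=2..m. \<bar>a k\<bar> powr (1 / real k)) * \<mu>"
proof -
  have "1 \<le> (\<Sum>k=2..m. \<bar>a k\<bar> * \<mu> ^ k)"
    unfolding assms(2)[symmetric] using assms(1) by (intro sum_mono mult_right_mono) auto
  also have "\<dots> = (\<Sum>k=2..m. (\<bar>a k\<bar> powr (1 / real k) * \<mu>) ^ k)"
    by (intro sum.cong refl abs_mult_power_eq_powr_root) auto
  finally have powers: "1 \<le> (\<Sum>k=2..m. (\<bar>a k\<bar> powr (1 / real k) * \<mu>) ^ k)" .
  have "1 \<le> (\<Sum>k=2..m. \<bar>a k\<bar> powr (1 / real k) * \<mu>)"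
    using assms(1) by (intro sum_ge_one_of_sum_powers_ge_one[OF _ _ powers]) auto
  then show ?thesis by (simp add: sum_distrib_right)
qed

lemma level_point_upper_bound:
  fixes a :: "nat \<Rightarrow> real"
  assumes K: "\<forall>c M. (\<forall>t\<in>{0..1}. \<bar>\<Sum>k\<le>m. c k * t ^ k\<bar> \<le> M) \<longrightarrow> (\<forall>k\<le>m. \<bar>c k\<bar> \<le> K * M)"
    and "0 \<le> \<mu>" and bd: "\<forall>t\<in>{0..1}. \<bar>\<Sum>k=2..m. a k * (t * \<mu>) ^ k\<bar> \<le> 1"
  shows "(\<Sum>k=2..m. \<bar>a k\<bar> powr (1 / real k)) * \<mu> \<le> real (m - 1) * max 1 K"
proof -
  define c where "c k = (if 2 \<le> k then a k * \<mu> ^ k else 0)" for k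
  have "(\<Sum>k\<le>m. c k * t ^ k) = (\<Sum>k=2..m. a k * (t * \<mu>) ^ k)" for t
  proof -
    have "(\<Sum>k\<le>m. c k * t ^ k) = (\<Sum>k\<in>{..m} \<inter> {k. 2 \<le> k}. a k * \<mu> ^ k * t ^ k)"
      by (simp add: c_def sum.inter_restrict if_distrib[of "\<lambda>x. x * _"] cong: if_cong)
    also have "{..m} \<inter> {k. 2 \<le> k} = {2..m}" by auto
    finally show ?thesis by (simp add: power_mult_distrib ac_simps)
  qed
  then have "\<forall>t\<in>{0..1}. \<bar>\<Sum>k\<le>m. c k * t ^ k\<bar> \<le> 1"
    using bd by simp
  then have "\<forall>k\<le>m. \<bar>c k\<bar> \<le> K * 1"
    using K by blast
  then have "\<bar>a k\<bar> * \<mu> ^ k \<le> K" if "k \<in> {2..m}" for k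
    using that \<open>0 \<le> \<mu>\<close> by (auto simp: c_def abs_mult)
  then have "(\<Sum>k=2..m. \<bar>a k\<bar> powr (1 / real k) * \<mu>) \<le> card {2..m} * max 1 K"
    using \<open>0 \<le> \<mu>\<close> by (intro sum_le_card_of_powers_le) (auto simp: abs_mult_power_eq_powr_root)
  then show ?thesis by (simp add: sum_distrib_right)
qed

lemma convex_level_point_bounds:
  fixes a :: "nat \<Rightarrow> real"
  assumes K: "\<forall>c M. (\<forall>t\<in>{0..1}. \<bar>\<Sum>k\<le>m. c k * t ^ k\<bar> \<le> M) \<longrightarrow> (\<forall>k\<le>m. \<bar>c k\<bar> \<le> K * M)"
    and cvx: "convex_on {0..A} (\<lambda>x. \<Sum>k=2..m. a k * x ^ k)"
    and \<mu>: "\<mu> \<in> {0..A}" and P\<mu>: "(\<Sum>k=2..m. a k * \<mu> ^ k) = 1"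
  shows "1 \<le> (\<Sum>k=2..m. \<bar>a k\<bar> powr (1 / real k)) * \<mu>"
    and "(\<Sum>k=2..m. \<bar>a k\<bar> powr (1 / real k)) * \<mu> \<le> real (m - 1) * max 1 K"
proof -
  let ?P = "\<lambda>x. \<Sum>k=2..m. a k * x ^ k"
  have P0: "?P 0 = 0" by simp
  show "1 \<le> (\<Sum>k=2..m. \<bar>a k\<bar> powr (1 / real k)) * \<mu>"
    using level_point_lower_bound \<mu> P\<mu> by simp
  have "\<bar>?P (t * \<mu>)\<bar> \<le> 1" if t: "t \<in> {0..1}" for t
  proof -
    have "t * \<mu> \<in> {0..A}"
      using t \<mu> mult_left_le_one_le[of \<mu> t] by auto
    then have "0 \<le> ?P (t * \<mu>)"
      by (rule convex_on_nonneg_of_deriv_zero[OF cvx P0 has_real_derivative_sum_power_from_two_at_0])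
    moreover have "?P (t * \<mu>) \<le> t"
      using convex_on_scale_le[OF cvx P0 \<mu>, of t] t P\<mu> by simp
    ultimately show ?thesis using t by simp
  qed
  then show "(\<Sum>k=2..m. \<bar>a k\<bar> powr (1 / real k)) * \<mu> \<le> real (m - 1) * max 1 K"
    using level_point_upper_bound[OF K] \<mu> by simp
qed

theorem proposition4p6:
  fixes m :: nat
  assumes "m \<ge> 2"
  shows "\<exists>c>0. \<forall>(A::real) (a::nat \<Rightarrow> real).
           A > 0 \<longrightarrow> a m \<noteq> 0 \<longrightarrow>
           convex_on {0..A} (\<lambda>x. \<Sum>k=2..m. a k * x ^ k) \<longrightarrow>
           (\<Sum>k=2..m. a k * A ^ k) > 1 \<longrightarrow>
           (\<exists>!\<mu>. \<mu> \<in> {0..A} \<and> (\<Sum>k=2..m. a k * \<mu> ^ k) = 1) \<and>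
           (\<forall>\<mu>\<in>{0..A}. (\<Sum>k=2..m. a k * \<mu> ^ k) = 1 \<longrightarrow>
              c * inverse (\<Sum>k=2..m. \<bar>a k\<bar> powr (1 / real k)) \<le> \<mu> \<and>
              \<mu> \<le> inverse c * inverse (\<Sum>k=2..m. \<bar>a k\<bar> powr (1 / real k)))"
proof -
  obtain K :: real where
    K: "\<forall>c M. (\<forall>t\<in>{0..1}. \<bar>\<Sum>k\<le>m. c k * t ^ k\<bar> \<le> M) \<longrightarrow> (\<forall>k\<le>m. \<bar>c k\<bar> \<le> K * M)"
    using polynomial_coeffs_bounded_by_sup[of 1 m] by auto
  define C where "C = real (m - 1) * max 1 K"
  have C: "1 \<le> C"
    unfolding C_def using assms mult_mono[of 1 "real (m - 1)" 1 "max 1 K"] by auto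
  show ?thesis
  proof (intro exI[of _ "inverse C"] allI impI conjI ballI)
    show "0 < inverse C" using C by simp
    fix A :: real and a :: "nat \<Rightarrow> real"
    assume A: "A > 0" and "a m \<noteq> 0" and cvx: "convex_on {0..A} (\<lambda>x. \<Sum>k=2..m. a k * x ^ k)"
      and PA: "(\<Sum>k=2..m. a k * A ^ k) > 1"
    show "\<exists>!\<mu>. \<mu> \<in> {0..A} \<and> (\<Sum>k=2..m. a k * \<mu> ^ k) = 1"
      using A PA by (intro convex_on_ex1_level[OF cvx]) (auto intro!: continuous_intros)
    fix \<mu> assume "\<mu> \<in> {0..A}" and "(\<Sum>k=2..m. a k * \<mu> ^ k) = 1"
    note bounds = convex_level_point_bounds[OF K cvx this, folded C_def]
    have "inverse C * inverse S \<le> \<mu> \<and> \<mu> \<le> inverse (inverse C) * inverse S"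
      if "0 \<le> S" "1 \<le> S * \<mu>" "S * \<mu> \<le> C" for S
    proof -
      have "0 < S" using that by (cases "S = 0") auto
      then show ?thesis using that C mult_mono[of 1 C 1 "S * \<mu>"] by (simp add: field_simps)
    qed
    with bounds show "inverse C * inverse (\<Sum>k=2..m. \<bar>a k\<bar> powr (1 / real k)) \<le> \<mu>"
      and "\<mu> \<le> inverse (inverse C) * inverse (\<Sum>k=2..m. \<bar>a k\<bar> powr (1 / real k))"
      by (simp_all add: sum_nonneg)
  qed
qed

end
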